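(* Let $P,Q\in R[x][\partial]$. If $P$ and $Q$ are $R$-primitive, then so is $PQ$.
   Context: $R$ is a principal ideal domain; $\sigma$ is an $R$-automorphism of $R[x]$ with $\sigma(x)=\gamma x+\tau$ ($\gamma,\tau\in R$, $\gamma$ a unit), $\delta$ an $R$-linear $\sigma$-derivation of $R[x]$ with $\delta(x)$ of degree at most $1$; $R[x][\partial]$ is the Ore algebra with $\partial p=\sigma(p)\partial+\delta(p)$. Writing $L=a_kf_k\partial^k+\dots+a_0f_0$ with $a_i\in R$ and $f_i\in R[x]$ primitive (coefficients with gcd $1$), $L$ is $R$-primitive if $\gcd(a_0,\dots,a_k)=1$. *)

theory Defs
  imports "HOL-Computational_Algebra.Polynomial_Factorial"
begin

definition is_PID_ring :: "'a::comm_ring_1 itself \<Rightarrow> bool" where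
  "is_PID_ring _ \<longleftrightarrow>
     (\<forall>I :: 'a set. (0 \<in> I \<and> (\<forall>x\<in>I. \<forall>y\<in>I. x + y \<in> I) \<and> (\<forall>x\<in>I. \<forall>r. r * x \<in> I))
        \<longrightarrow> (\<exists>g. I = {r * g | r. True}))"

definition ore_sigma :: "'a::comm_ring_1 \<Rightarrow> 'a \<Rightarrow> 'a poly \<Rightarrow> 'a poly" where
  "ore_sigma \<gamma> \<tau> p = pcompose p [:\<tau>, \<gamma>:]"

text \<open>An element of R[x][d] is represented as an 'a poly poly: the coefficient of d^i is
  coeff L i.  Left multiplication by d:  d (p d^i) = sigma(p) d^(i+1) + delta(p) d^i.\<close>
definition ore_dmul :: "('a::comm_ring_1 poly \<Rightarrow> 'a poly) \<Rightarrow> ('a poly \<Rightarrow> 'a poly)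
    \<Rightarrow> 'a poly poly \<Rightarrow> 'a poly poly" where
  "ore_dmul \<sigma> \<delta> L = pCons 0 (map_poly \<sigma> L) + map_poly \<delta> L"

definition ore_mult :: "('a::comm_ring_1 poly \<Rightarrow> 'a poly) \<Rightarrow> ('a poly \<Rightarrow> 'a poly)
    \<Rightarrow> 'a poly poly \<Rightarrow> 'a poly poly \<Rightarrow> 'a poly poly" where
  "ore_mult \<sigma> \<delta> P Q = (\<Sum>i\<le>degree P. smult (coeff P i) ((ore_dmul \<sigma> \<delta> ^^ i) Q))"

definition R_primitive :: "'a::factorial_ring_gcd poly poly \<Rightarrow> bool" where
  "R_primitive L \<longleftrightarrow>
     (\<exists>(a :: nat \<Rightarrow> 'a) (f :: nat \<Rightarrow> 'a poly).
        (\<forall>i\<le>degree L. coeff L i = smult (a i) (f i) \<and> content (f i) = 1) \<and>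
        Gcd (a ` {..degree L}) = 1)"

end

theory Submission
  imports Defs
begin

text \<open>\<open>L\<close> is R-primitive iff no \<open>p \<in> R\<close> that is zero or prime divides all coefficients of \<open>L\<close>,
  and for such \<open>p\<close> the constant \<open>[:p:]\<close> is zero or prime in \<open>R[x]\<close>. Write \<open>P = P\<^sub>1 + P\<^sub>2\<close> and
  \<open>Q = Q\<^sub>1 + Q\<^sub>2\<close>, where \<open>[:p:]\<close> divides all coefficients of \<open>P\<^sub>2, Q\<^sub>2\<close> but not the leading
  coefficients \<open>a, b\<close> of \<open>P\<^sub>1, Q\<^sub>1\<close>. As \<open>\<sigma>\<close> and \<open>\<delta>\<close> are \<open>R\<close>-linear, every product involving
  \<open>P\<^sub>2\<close> or \<open>Q\<^sub>2\<close> is divisible by \<open>[:p:]\<close>, while the top coefficient of \<open>P\<^sub>1Q\<^sub>1\<close> is \<open>a \<sigma>\<^sup>m(b)\<close>,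
  \<open>m = deg P\<^sub>1\<close>, which is not, because \<open>[:p:]\<close> is prime and \<open>\<sigma>\<close> is invertible.\<close>

lemma content_primitive_part_eq_1:
  fixes q :: "'a::factorial_ring_gcd poly"
  assumes "q \<noteq> 0"
  shows "content (primitive_part q) = 1"
proof -
  let ?c = "content q" and ?d = "content (primitive_part q)"
  obtain g where g: "primitive_part q = [:?d:] * g"
    using content_dvd dvdE by blast
  have "q = smult ?c ([:?d:] * g)" by (subst g [symmetric]) simp
  also have "\<dots> = [:?c * ?d:] * g" by simp
  finally have "[:?c * ?d:] dvd q" by (rule dvdI)
  then have "?c * ?d dvd ?c * 1" by (simp only: const_poly_dvd_iff_dvd_content mult_1_right)
  with assms have "is_unit ?d" by (subst (asm) dvd_mult_cancel_left) simp
  then show ?thesis by simp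
qed

lemma dvd_of_const_dvd_smult_primitive:
  fixes p a :: "'a::factorial_ring_gcd"
  assumes "p = 0 \<or> prime p" and "content f = 1" and "[:p:] dvd smult a f"
  shows "p dvd a"
proof (cases "p = 0")
  case True
  with assms(2,3) show ?thesis by auto
next
  case False
  with assms(1) have prime: "prime p" by simp
  show ?thesis
  proof (rule ccontr)
    assume "\<not> p dvd a"
    with prime assms(3) have "p dvd coeff f n" for n
      by (metis const_poly_dvd_iff coeff_smult prime_dvd_mult_iff)
    then have "p dvd content f"
      using const_poly_dvd_iff const_poly_dvd_iff_dvd_content by blast
    with prime assms(2) show False by simp
  qed
qed

lemma R_primitive_iff_no_const_divisor:
  fixes L :: "'a::factorial_ring_gcd poly poly"
  shows "R_primitive L \<longleftrightarrow> (\<forall>p. p = 0 \<or> prime p \<longrightarrow> \<not> [:[:p:]:] dvd L)"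
proof (intro iffI allI impI notI)
  fix p :: 'a
  assume "R_primitive L" and p: "p = 0 \<or> prime p" and "[:[:p:]:] dvd L"
  then obtain a f where af: "\<forall>i\<le>degree L. coeff L i = smult (a i) (f i) \<and> content (f i) = 1"
    and Gcd: "Gcd (a ` {..degree L}) = 1"
    unfolding R_primitive_def by blast
  have "p dvd a i" if "i \<le> degree L" for i
  proof (rule dvd_of_const_dvd_smult_primitive[OF p])
    show "content (f i) = 1" using af that by simp
    have "[:p:] dvd coeff L i" using \<open>[:[:p:]:] dvd L\<close> by (simp add: const_poly_dvd_iff)
    then show "[:p:] dvd smult (a i) (f i)" using af that by simp
  qed
  then have "p dvd Gcd (a ` {..degree L})" by (auto intro: Gcd_greatest)
  with p Gcd show False by auto
next
  assume no_divisor: "\<forall>p. p = 0 \<or> prime p \<longrightarrow> \<not> [:[:p:]:] dvd L"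
  define a where "a i = content (coeff L i)" for i
  define f where "f i = (if coeff L i = 0 then 1 else primitive_part (coeff L i))" for i
  let ?g = "Gcd (a ` {..degree L})"
  have dvd_L: "[:[:b:]:] dvd L" if "b dvd ?g" for b
  proof -
    have "[:b:] dvd coeff L i" for i
    proof (cases "i \<le> degree L")
      case True
      then have "b dvd a i" using \<open>b dvd ?g\<close> by (meson Gcd_dvd atMost_iff dvd_trans image_eqI)
      then show ?thesis by (simp add: a_def const_poly_dvd_iff_dvd_content)
    qed (simp add: coeff_eq_0)
    then show ?thesis by (simp add: const_poly_dvd_iff)
  qed
  have "?g \<noteq> 0" using dvd_L[of 0] no_divisor by auto
  moreover have "is_unit ?g"
  proof (rule ccontr)
    assume "\<not> is_unit ?g"
    with \<open>?g \<noteq> 0\<close> obtain b where "b dvd ?g" "prime b" by (metis prime_divisor_exists)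
    with dvd_L no_divisor show False by blast
  qed
  ultimately have "?g = 1" by (metis normalize_Gcd is_unit_normalize)
  moreover have "coeff L i = smult (a i) (f i) \<and> content (f i) = 1" for i
    by (auto simp: a_def f_def content_primitive_part_eq_1)
  ultimately show "R_primitive L" unfolding R_primitive_def by blast
qed

lemma split_off_const_multiple:
  fixes P :: "'a::idom poly poly"
  assumes "\<not> [:c:] dvd P"
  obtains P1 P2 where "P = P1 + P2" and "[:c:] dvd P2" and "\<not> c dvd lead_coeff P1"
proof -
  define S where "S = {k. \<not> c dvd coeff P k}"
  have "S \<subseteq> {..degree P}"
    unfolding S_def by (auto, metis coeff_eq_0 dvd_0_right not_le)
  then have "finite S" using finite_subset by blast
  moreover have "S \<noteq> {}" using assms unfolding S_def const_poly_dvd_iff by auto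
  ultimately have i: "Max S \<in> S" by (rule Max_in)
  have above_i: "c dvd coeff P k" if "Max S < k" for k
    using Max_ge[OF \<open>finite S\<close>] that unfolding S_def by (metis mem_Collect_eq not_le)
  define P1 where "P1 = poly_cutoff (Suc (Max S)) P"
  have "coeff P (Max S) \<noteq> 0" using i S_def by auto
  then have "degree P1 = Max S"
    by (intro antisym degree_le le_degree) (auto simp: P1_def coeff_poly_cutoff)
  then have "lead_coeff P1 = coeff P (Max S)" by (simp add: P1_def coeff_poly_cutoff)
  moreover have "[:c:] dvd P - P1"
    unfolding const_poly_dvd_iff using above_i by (simp add: P1_def coeff_poly_cutoff)
  ultimately show thesis using i S_def by (intro that[of P1 "P - P1"]) auto
qed

context
  fixes \<sigma> \<delta> :: "'a::idom poly \<Rightarrow> 'a poly"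
  assumes sigma_add: "\<And>p q. \<sigma> (p + q) = \<sigma> p + \<sigma> q"
    and delta_add: "\<And>p q. \<delta> (p + q) = \<delta> p + \<delta> q"
begin

lemma sigma_0: "\<sigma> 0 = 0"
  using sigma_add[of 0 0] by (metis add.right_neutral add_left_cancel)

lemma delta_0: "\<delta> 0 = 0"
  using delta_add[of 0 0] by (metis add.right_neutral add_left_cancel)

lemma coeff_ore_dmul:
  "coeff (ore_dmul \<sigma> \<delta> L) n = (if n = 0 then 0 else \<sigma> (coeff L (n - 1))) + \<delta> (coeff L n)"
  by (cases n) (simp_all add: ore_dmul_def coeff_map_poly sigma_0 delta_0)

lemma ore_dmul_pow_add:
  "(ore_dmul \<sigma> \<delta> ^^ k) (L + M) = (ore_dmul \<sigma> \<delta> ^^ k) L + (ore_dmul \<sigma> \<delta> ^^ k) M"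
proof -
  have "ore_dmul \<sigma> \<delta> (L + M) = ore_dmul \<sigma> \<delta> L + ore_dmul \<sigma> \<delta> M" for L M
    by (rule poly_eqI) (simp add: coeff_ore_dmul sigma_add delta_add)
  then show ?thesis by (induction k) simp_all
qed

lemma ore_dmul_pow_top_coeff:
  "degree ((ore_dmul \<sigma> \<delta> ^^ k) L) \<le> degree L + k \<and>
   coeff ((ore_dmul \<sigma> \<delta> ^^ k) L) (degree L + k) = (\<sigma> ^^ k) (lead_coeff L)"
proof (induction k)
  case (Suc k)
  let ?M = "(ore_dmul \<sigma> \<delta> ^^ k) L"
  have "coeff (ore_dmul \<sigma> \<delta> ?M) i = 0" if "i > degree L + Suc k" for i
    using Suc.IH that by (auto simp: coeff_ore_dmul coeff_eq_0 sigma_0 delta_0)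
  then show ?case
    using Suc.IH by (auto simp: coeff_ore_dmul coeff_eq_0 delta_0 intro: degree_le)
qed simp

lemma ore_mult_eq_sum_upto:
  "degree P \<le> N \<Longrightarrow> ore_mult \<sigma> \<delta> P Q = (\<Sum>i\<le>N. smult (coeff P i) ((ore_dmul \<sigma> \<delta> ^^ i) Q))"
  unfolding ore_mult_def by (rule sum.mono_neutral_left) (auto simp: coeff_eq_0)

lemma ore_mult_add_left:
  "ore_mult \<sigma> \<delta> (P1 + P2) Q = ore_mult \<sigma> \<delta> P1 Q + ore_mult \<sigma> \<delta> P2 Q"
  by (subst (1 2 3) ore_mult_eq_sum_upto[of _ "max (degree P1) (degree P2)"])
    (auto simp: degree_add_le smult_add_left sum.distrib)

lemma ore_mult_add_right:
  "ore_mult \<sigma> \<delta> P (Q1 + Q2) = ore_mult \<sigma> \<delta> P Q1 + ore_mult \<sigma> \<delta> P Q2"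
  unfolding ore_mult_def by (simp add: ore_dmul_pow_add smult_add_right sum.distrib)

lemma coeff_ore_mult_degree_add:
  "coeff (ore_mult \<sigma> \<delta> P Q) (degree P + degree Q) = lead_coeff P * (\<sigma> ^^ degree P) (lead_coeff Q)"
proof -
  have "coeff P k * coeff ((ore_dmul \<sigma> \<delta> ^^ k) Q) (degree P + degree Q) =
      (if k = degree P then lead_coeff P * (\<sigma> ^^ degree P) (lead_coeff Q) else 0)"
    if "k \<le> degree P" for k
  proof (cases "k = degree P")
    case True
    then show ?thesis using ore_dmul_pow_top_coeff[of k Q] by (simp add: add.commute)
  next
    case False
    with that ore_dmul_pow_top_coeff[of k Q]
    have "coeff ((ore_dmul \<sigma> \<delta> ^^ k) Q) (degree P + degree Q) = 0"
      by (intro coeff_eq_0) auto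
    with False show ?thesis by simp
  qed
  then have "coeff (ore_mult \<sigma> \<delta> P Q) (degree P + degree Q) =
      (\<Sum>k\<le>degree P. if k = degree P then lead_coeff P * (\<sigma> ^^ degree P) (lead_coeff Q) else 0)"
    unfolding ore_mult_def coeff_sum coeff_smult by (intro sum.cong) auto
  then show ?thesis by simp
qed

lemma const_dvd_ore_mult_left:
  "[:c:] dvd P \<Longrightarrow> [:c:] dvd ore_mult \<sigma> \<delta> P Q"
  unfolding const_poly_dvd_iff ore_mult_def by (auto simp: coeff_sum intro!: dvd_sum)

lemma const_dvd_ore_mult_right:
  assumes "\<And>q. c dvd q \<Longrightarrow> c dvd \<sigma> q" and "\<And>q. c dvd q \<Longrightarrow> c dvd \<delta> q"
    and "[:c:] dvd Q"
  shows "[:c:] dvd ore_mult \<sigma> \<delta> P Q"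
proof -
  have "[:c:] dvd (ore_dmul \<sigma> \<delta> ^^ k) Q" for k
    using assms by (induction k) (auto simp: const_poly_dvd_iff coeff_ore_dmul)
  then show ?thesis
    unfolding const_poly_dvd_iff ore_mult_def by (auto simp: coeff_sum intro!: dvd_sum)
qed

lemma not_const_dvd_ore_mult:
  assumes c: "c = 0 \<or> prime_elem c"
    and sigma_dvd_iff: "\<And>q. c dvd \<sigma> q \<longleftrightarrow> c dvd q"
    and delta_dvd: "\<And>q. c dvd q \<Longrightarrow> c dvd \<delta> q"
    and "\<not> [:c:] dvd P" and "\<not> [:c:] dvd Q"
  shows "\<not> [:c:] dvd ore_mult \<sigma> \<delta> P Q"
proof
  assume dvd_PQ: "[:c:] dvd ore_mult \<sigma> \<delta> P Q"
  from \<open>\<not> [:c:] dvd P\<close>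
  obtain P1 P2 where P: "P = P1 + P2" "[:c:] dvd P2" "\<not> c dvd lead_coeff P1"
    by (rule split_off_const_multiple)
  from \<open>\<not> [:c:] dvd Q\<close>
  obtain Q1 Q2 where Q: "Q = Q1 + Q2" "[:c:] dvd Q2" "\<not> c dvd lead_coeff Q1"
    by (rule split_off_const_multiple)
  have "ore_mult \<sigma> \<delta> P Q = ore_mult \<sigma> \<delta> P1 Q1 + (ore_mult \<sigma> \<delta> P1 Q2 + ore_mult \<sigma> \<delta> P2 Q)"
    by (simp add: P(1) Q(1) ore_mult_add_left ore_mult_add_right add.assoc)
  moreover have "[:c:] dvd ore_mult \<sigma> \<delta> P1 Q2"
    by (rule const_dvd_ore_mult_right) (simp_all add: sigma_dvd_iff delta_dvd Q(2))
  moreover have "[:c:] dvd ore_mult \<sigma> \<delta> P2 Q"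
    using P(2) by (rule const_dvd_ore_mult_left)
  ultimately have "[:c:] dvd ore_mult \<sigma> \<delta> P1 Q1"
    using dvd_PQ by (simp add: dvd_add_left_iff)
  then have "c dvd coeff (ore_mult \<sigma> \<delta> P1 Q1) (degree P1 + degree Q1)"
    by (simp add: const_poly_dvd_iff)
  then have dvd_product: "c dvd lead_coeff P1 * (\<sigma> ^^ degree P1) (lead_coeff Q1)"
    by (simp only: coeff_ore_mult_degree_add)
  have not_dvd_iterate: "\<not> c dvd (\<sigma> ^^ k) (lead_coeff Q1)" for k
    using Q(3) sigma_dvd_iff by (induction k) auto
  show False
    using c
  proof
    assume "c = 0"
    with dvd_product P(3) not_dvd_iterate show False by simp
  next
    assume "prime_elem c"
    with dvd_product P(3) not_dvd_iterate show False by (auto dest: prime_elem_dvd_multD)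
  qed
qed

end

lemma ore_sigma_add: "ore_sigma \<gamma> \<tau> (p + q) = ore_sigma \<gamma> \<tau> p + ore_sigma \<gamma> \<tau> q"
  by (simp add: ore_sigma_def pcompose_add)

lemma const_dvd_pcompose:
  assumes "[:c:] dvd p"
  shows "[:c:] dvd pcompose p q"
proof -
  from assms obtain k where "p = [:c:] * k" by (rule dvdE)
  then have "pcompose p q = [:c:] * pcompose k q" by (simp only: pcompose_mult pcompose_const)
  then show ?thesis by (rule dvdI)
qed

lemma const_dvd_ore_sigma_iff:
  assumes "is_unit \<gamma>"
  shows "[:p:] dvd ore_sigma \<gamma> \<tau> q \<longleftrightarrow> [:p:] dvd q"
proof
  obtain u where u: "\<gamma> * u = 1" using assms by (metis dvdE)
  then have "\<gamma> * (\<tau> * u) = \<tau>" by (metis mult.left_commute mult_1_right)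
  then have "pcompose [:\<tau>, \<gamma>:] [:- \<tau> * u, u:] = [:0, 1:]"
    by (simp add: pcompose_pCons u)
  then have inverse: "pcompose (ore_sigma \<gamma> \<tau> q) [:- \<tau> * u, u:] = q"
    by (simp add: ore_sigma_def flip: pcompose_assoc)
  assume "[:p:] dvd ore_sigma \<gamma> \<tau> q"
  then show "[:p:] dvd q"
    using const_dvd_pcompose[of p "ore_sigma \<gamma> \<tau> q" "[:- \<tau> * u, u:]"] by (simp only: inverse)
next
  assume "[:p:] dvd q"
  then show "[:p:] dvd ore_sigma \<gamma> \<tau> q"
    unfolding ore_sigma_def by (rule const_dvd_pcompose)
qed

lemma const_dvd_smult_linear:
  assumes linear: "\<And>a q. f (smult a q) = smult a (f q)" and "[:c:] dvd p"
  shows "[:c:] dvd f p"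
proof -
  from \<open>[:c:] dvd p\<close> obtain q where "p = [:c:] * q" by (rule dvdE)
  then have "f p = [:c:] * f q" using linear[of c q] by simp
  then show ?thesis by (rule dvdI)
qed

theorem mainTheorem15:
  fixes \<gamma> \<tau> :: "'a::factorial_ring_gcd"
    and \<delta> :: "'a poly \<Rightarrow> 'a poly"
    and P Q :: "'a poly poly"
  assumes PID: "is_PID_ring TYPE('a)"
    and unit: "is_unit \<gamma>"
    and delta_add: "\<And>p q. \<delta> (p + q) = \<delta> p + \<delta> q"
    and delta_smult: "\<And>c p. \<delta> (smult c p) = smult c (\<delta> p)"
    and delta_deriv: "\<And>p q. \<delta> (p * q) = ore_sigma \<gamma> \<tau> p * \<delta> q + \<delta> p * q"
    and delta_x: "degree (\<delta> [:0, 1:]) \<le> 1"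
    and "R_primitive P" and "R_primitive Q"
  shows "R_primitive (ore_mult (ore_sigma \<gamma> \<tau>) \<delta> P Q)"
  unfolding R_primitive_iff_no_const_divisor
proof (intro allI impI)
  fix p :: 'a
  assume p: "p = 0 \<or> prime p"
  then have "[:p:] = 0 \<or> prime_elem [:p:]"
    by (auto simp: prime_elem_const_poly_iff prime_def)
  from not_const_dvd_ore_mult[OF ore_sigma_add[of \<gamma> \<tau>] delta_add this
      const_dvd_ore_sigma_iff[OF unit] const_dvd_smult_linear[OF delta_smult]]
  show "\<not> [:[:p:]:] dvd ore_mult (ore_sigma \<gamma> \<tau>) \<delta> P Q"
    using assms(7,8) p unfolding R_primitive_iff_no_const_divisor by blast
qed

end
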